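(* Let $\phi$ be a formula, $\xi,\eta$ models, and $k,m\in\omega$ with $m>0$, such that: (1) $\mathrm{Sub}(\phi,\langle k,0\rangle,\xi)=\mathrm{Sub}(\phi,\langle k+m,0\rangle,\xi)$; (2) $\xi(\mathbf t,p)=\eta(\mathbf t,p)$ for all $\mathbf t<\langle k+m,0\rangle$ and all $p\in Var$; (3) $\eta(s_1,s_2,p)=\eta(s_1+m,s_2,p)$ for all $\mathbf s\ge\langle k,0\rangle$ and all $p\in Var$; (4) whenever $\psi\,\mathtt U\,\theta\in\mathrm{Sub}(\phi)$ and $\xi\models_{\langle k,0\rangle}\psi\,\mathtt U\,\theta$, there is $\mathbf r$ with $\langle k,0\rangle\le\mathbf r<\langle k+m,0\rangle$ and $\xi\models_{\mathbf r}\theta$. Then (a) $\mathrm{Sub}(\phi,\mathbf t,\xi)=\mathrm{Sub}(\phi,\mathbf t,\eta)$ for all $\mathbf t<\langle k+m,0\rangle$; and (b) $\mathrm{Sub}(\phi,\mathbf s,\eta)=\mathrm{Sub}(\phi,\langle s_1+m,s_2\rangle,\eta)$ for all $\mathbf s\ge\langle k,0\rangle$.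
   Context: Fix $Var=\{p_n : n\in\omega\}$. The formulas of $L([1],[\omega],\mathtt u,\mathtt U)$ form the smallest set containing $Var$ and closed under $\neg\phi$, $[1]\phi$, $[\omega]\phi$, $(\phi\wedge\psi)$, $(\phi\,\mathtt u\,\psi)$, $(\phi\,\mathtt U\,\psi)$. Time instants are pairs $\mathbf t=\langle t_1,t_2\rangle\in\omega\times\omega$ ordered lexicographically ($\langle i,j\rangle\le\langle k,l\rangle$ iff $i<k$, or $i=k$ and $j\le l$). A model is a function $\xi:\omega\times\omega\times Var\to\{0,1\}$; we write $\xi(\mathbf t,p)$ for $\xi(t_1,t_2,p)$. Satisfaction: $\xi\models_{\mathbf r}p$ iff $\xi(r_1,r_2,p)=1$; $\neg,\wedge$ classical; $\xi\models_{\mathbf r}[1]\phi$ iff $\xi\models_{\langle r_1,r_2+1\rangle}\phi$; $\xi\models_{\mathbf r}[\omega]\phi$ iff $\xi\models_{\langle r_1+1,0\rangle}\phi$; $\xi\models_{\mathbf r}\phi\,\mathtt u\,\psi$ iff there is $k\in\omega$ with $\xi\models_{\langle r_1,r_2+k\rangle}\psi$ and $\xi\models_{\langle r_1,r_2+i\rangle}\phi$ for all $0\le i<k$; $\xi\models_{\mathbf r}\phi\,\mathtt U\,\psi$ iff there is $\mathbf s\ge\mathbf r$ with $\xi\models_{\mathbf s}\psi$ and $\xi\models_{\mathbf t}\phi$ for all $\mathbf r\le\mathbf t<\mathbf s$. $\mathrm{Sub}(\phi)$ is the set of subformulas of $\phi$, and $\mathrm{Sub}(\phi,\mathbf t,\xi)=\{\psi\in\mathrm{Sub}(\phi)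 : \xi\models_{\mathbf t}\psi\}$. *)

theory Defs
  imports Main
begin

datatype form = Var nat | Neg form | Next1 form | NextW form
  | And form form | Until form form | UUntil form form

text \<open>Models: omega x omega x Var to {0,1}, rendered as a boolean-valued function.\<close>
type_synonym model = "nat \<Rightarrow> nat \<Rightarrow> nat \<Rightarrow> bool"

definition lex_le :: "nat \<times> nat \<Rightarrow> nat \<times> nat \<Rightarrow> bool" where
  "lex_le t s \<longleftrightarrow> fst t < fst s \<or> (fst t = fst s \<and> snd t \<le> snd s)"

definition lex_less :: "nat \<times> nat \<Rightarrow> nat \<times> nat \<Rightarrow> bool" where
  "lex_less t s \<longleftrightarrow> lex_le t s \<and> t \<noteq> s"

fun sat :: "model \<Rightarrow> nat \<times> nat \<Rightarrow> form \<Rightarrow> bool" where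
  "sat \<xi> r (Var n) = \<xi> (fst r) (snd r) n"
| "sat \<xi> r (Neg \<phi>) = (\<not> sat \<xi> r \<phi>)"
| "sat \<xi> r (Next1 \<phi>) = sat \<xi> (fst r, Suc (snd r)) \<phi>"
| "sat \<xi> r (NextW \<phi>) = sat \<xi> (Suc (fst r), 0) \<phi>"
| "sat \<xi> r (And \<phi> \<psi>) = (sat \<xi> r \<phi> \<and> sat \<xi> r \<psi>)"
| "sat \<xi> r (Until \<phi> \<psi>) =
     (\<exists>k. sat \<xi> (fst r, snd r + k) \<psi> \<and> (\<forall>i<k. sat \<xi> (fst r, snd r + i) \<phi>))"
| "sat \<xi> r (UUntil \<phi> \<psi>) =
     (\<exists>s. lex_le r s \<and> sat \<xi> s \<psi> \<and> (\<forall>t. lex_le r t \<and> lex_less t s \<longrightarrow> sat \<xi> t \<phi>))"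

fun Sub :: "form \<Rightarrow> form set" where
  "Sub (Var n) = {Var n}"
| "Sub (Neg \<phi>) = insert (Neg \<phi>) (Sub \<phi>)"
| "Sub (Next1 \<phi>) = insert (Next1 \<phi>) (Sub \<phi>)"
| "Sub (NextW \<phi>) = insert (NextW \<phi>) (Sub \<phi>)"
| "Sub (And \<phi> \<psi>) = insert (And \<phi> \<psi>) (Sub \<phi> \<union> Sub \<psi>)"
| "Sub (Until \<phi> \<psi>) = insert (Until \<phi> \<psi>) (Sub \<phi> \<union> Sub \<psi>)"
| "Sub (UUntil \<phi> \<psi>) = insert (UUntil \<phi> \<psi>) (Sub \<phi> \<union> Sub \<psi>)"

definition SubAt :: "form \<Rightarrow> nat \<times> nat \<Rightarrow> model \<Rightarrow> form set" where
  "SubAt \<phi> t \<xi> = {\<psi> \<in> Sub \<phi>. sat \<xi> t \<psi>}"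

end

theory Submission
  imports Defs "HOL-Library.Product_Lexorder"
begin

(*
  Satisfaction at an instant only depends on the model from that instant on, and shifting a
  model by m rows shifts satisfaction by m rows; so the periodicity of \<eta> beyond row k
  gives (b).  Below (k + m, 0) the two
  models have the same valuation, so truth values can only differ through formulas that look
  at or beyond the boundary (k + m, 0): the [\<omega>]-successor of the last row and U.  At the
  boundary \<xi> behaves as at (k, 0) by (1) and \<eta> does by (b), so agreement at (k, 0)
  carries over.  For U, hypothesis (4) (for \<xi>) and periodicity (for \<eta>) show that its
  truth at (k, 0) is decided inside the first period, where the models agree.
*)

lemma lex_le_eq_less_eq [simp]: "lex_le = (\<le>)"
  by (auto simp: fun_eq_iff lex_le_def less_eq_prod_def)

lemma lex_less_eq_less [simp]: "lex_less = (<)"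
  by (auto simp: fun_eq_iff lex_less_def less_le)

lemma Sub_self: "\<phi> \<in> Sub \<phi>"
  by (cases \<phi>) auto

lemma Sub_mono: "\<psi> \<in> Sub \<phi> \<Longrightarrow> Sub \<psi> \<subseteq> Sub \<phi>"
  by (induction \<phi>) auto

lemma sat_UUntil:
  "sat X t (UUntil \<phi> \<psi>) \<longleftrightarrow> (\<exists>s\<ge>t. sat X s \<psi> \<and> (\<forall>u. t \<le> u \<and> u < s \<longrightarrow> sat X u \<phi>))"
  by auto

lemma sat_cong_from:
  "\<forall>t\<ge>r. X (fst t) (snd t) = Y (fst t) (snd t) \<Longrightarrow> sat X r \<phi> = sat Y r \<phi>"
proof (induction \<phi> arbitrary: r)
  case (Var n)
  then show ?case by auto
next
  case (Neg \<phi>)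
  then show ?case by simp
next
  case (And \<phi> \<psi>)
  then show ?case by simp
next
  case (Next1 \<phi>)
  have "r \<le> (fst r, Suc (snd r))" by (cases r) auto
  then show ?case using Next1.IH Next1.prems order_trans by (metis sat.simps(3))
next
  case (NextW \<phi>)
  have "r \<le> (Suc (fst r), 0)" by (cases r) auto
  then show ?case using NextW.IH NextW.prems order_trans by (metis sat.simps(4))
next
  case (Until \<phi> \<psi>)
  have "\<forall>t\<ge>(fst r, snd r + i). X (fst t) (snd t) = Y (fst t) (snd t)" for i
    using Until.prems order_trans[of r "(fst r, snd r + i)"] by (cases r) auto
  then have "sat X (fst r, snd r + i) \<phi> = sat Y (fst r, snd r + i) \<phi>"
    "sat X (fst r, snd r + i) \<psi> = sat Y (fst r, snd r + i) \<psi>" for i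
    using Until.IH by blast+
  then show ?case by simp
next
  case (UUntil \<phi> \<psi>)
  have "\<forall>t\<ge>s. X (fst t) (snd t) = Y (fst t) (snd t)" if "r \<le> s" for s
    using UUntil.prems that order_trans by blast
  then have "sat X s \<phi> = sat Y s \<phi>" "sat X s \<psi> = sat Y s \<psi>" if "r \<le> s" for s
    using UUntil.IH that by blast+
  then show ?case unfolding sat_UUntil
    by (meson order_trans)
qed

lemma ex_shifted_ge:
  fixes i j m :: nat
  shows "(\<exists>s. (i + m, j) \<le> s \<and> P s) \<longleftrightarrow> (\<exists>a b. (i, j) \<le> (a, b) \<and> P (a + m, b))"
proof
  assume "\<exists>s. (i + m, j) \<le> s \<and> P s"
  then obtain a b where "(i + m, j) \<le> (a, b)" "P (a, b)" by auto
  then show "\<exists>a b. (i, j) \<le> (a, b) \<and> P (a + m, b)"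
    by (intro exI[of _ "a - m"] exI[of _ b]) auto
next
  assume "\<exists>a b. (i, j) \<le> (a, b) \<and> P (a + m, b)"
  then obtain a b where "(i, j) \<le> (a, b)" "P (a + m, b)" by blast
  then show "\<exists>s. (i + m, j) \<le> s \<and> P s" by (intro exI[of _ "(a + m, b)"]) auto
qed

lemma all_shifted_ge:
  fixes i j m :: nat
  shows "(\<forall>s. (i + m, j) \<le> s \<longrightarrow> P s) \<longleftrightarrow> (\<forall>a b. (i, j) \<le> (a, b) \<longrightarrow> P (a + m, b))"
  using ex_shifted_ge[of i m j "\<lambda>s. \<not> P s"] by blast

lemma sat_shift: "sat (\<lambda>i. X (i + m)) (i, j) \<phi> = sat X (i + m, j) \<phi>"
proof (induction \<phi> arbitrary: i j)
  case (UUntil \<phi> \<psi>)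
  have "sat X (i + m, j) (UUntil \<phi> \<psi>) \<longleftrightarrow>
    (\<exists>s. (i + m, j) \<le> s \<and> sat X s \<psi> \<and> (\<forall>t. (i + m, j) \<le> t \<longrightarrow> t < s \<longrightarrow> sat X t \<phi>))"
    by auto
  also have "\<dots> \<longleftrightarrow> (\<exists>a b. (i, j) \<le> (a, b) \<and> sat X (a + m, b) \<psi> \<and>
      (\<forall>c d. (i, j) \<le> (c, d) \<longrightarrow> (c + m, d) < (a + m, b) \<longrightarrow> sat X (c + m, d) \<phi>))"
    unfolding ex_shifted_ge all_shifted_ge ..
  also have "\<dots> \<longleftrightarrow> sat (\<lambda>i. X (i + m)) (i, j) (UUntil \<phi> \<psi>)"
    by (simp add: UUntil.IH split_paired_Ex split_paired_All imp_conjL)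
  finally show ?case ..
qed auto

definition periodic_from :: "nat \<Rightarrow> nat \<Rightarrow> model \<Rightarrow> bool" where
  "periodic_from k m \<eta> \<longleftrightarrow> (\<forall>i\<ge>k. \<eta> (i + m) = \<eta> i)"

lemma sat_periodic:
  assumes "periodic_from k m \<eta>" and "k \<le> i"
  shows "sat \<eta> (i + m, j) \<phi> = sat \<eta> (i, j) \<phi>"
proof -
  have "\<forall>t\<ge>(i, j). \<eta> (fst t + m) (snd t) = \<eta> (fst t) (snd t)"
    using assms by (auto simp: periodic_from_def less_eq_prod_def)
  then have "sat (\<lambda>i. \<eta> (i + m)) (i, j) \<phi> = sat \<eta> (i, j) \<phi>"
    by (rule sat_cong_from)
  then show ?thesis
    by (simp add: sat_shift)
qed

lemma sat_periodic_mult: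
  assumes "periodic_from k m \<eta>" and "k \<le> i"
  shows "sat \<eta> (i + n * m, j) \<phi> = sat \<eta> (i, j) \<phi>"
proof (induction n)
  case (Suc n)
  have "sat \<eta> (i + Suc n * m, j) \<phi> = sat \<eta> (i + n * m + m, j) \<phi>"
    by (simp add: algebra_simps)
  also have "\<dots> = sat \<eta> (i + n * m, j) \<phi>"
    using assms by (intro sat_periodic) auto
  finally show ?case
    using Suc.IH by simp
qed simp

definition until_before :: "model \<Rightarrow> form \<Rightarrow> form \<Rightarrow> nat \<times> nat \<Rightarrow> nat \<times> nat \<Rightarrow> bool" where
  "until_before X \<phi> \<psi> t b \<longleftrightarrow>
     (\<exists>s. t \<le> s \<and> s < b \<and> sat X s \<psi> \<and> (\<forall>u. t \<le> u \<and> u < s \<longrightarrow> sat X u \<phi>))"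

lemma until_before_imp_sat: "until_before X \<phi> \<psi> t b \<Longrightarrow> sat X t (UUntil \<phi> \<psi>)"
  by (auto simp: until_before_def)

lemma until_before_cong:
  assumes "\<forall>u. t \<le> u \<and> u < b \<longrightarrow> sat X u \<phi> = sat Y u \<phi> \<and> sat X u \<psi> = sat Y u \<psi>"
  shows "until_before X \<phi> \<psi> t b = until_before Y \<phi> \<psi> t b"
  unfolding until_before_def using assms by (meson order.strict_trans)

lemma until_before_if_witness:
  assumes "sat X t (UUntil \<phi> \<psi>)" and "t \<le> r" "r < b" "sat X r \<psi>"
  shows "until_before X \<phi> \<psi> t b"
proof -
  obtain s where s: "t \<le> s" "sat X s \<psi>" "\<forall>u. t \<le> u \<and> u < s \<longrightarrow> sat X u \<phi>"
    using assms(1) by auto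
  show ?thesis
  proof (cases "s < b")
    case True
    with s show ?thesis unfolding until_before_def by blast
  next
    case False
    with assms(3) have "r < s" by simp
    with s assms(2-4) show ?thesis unfolding until_before_def by (meson order.strict_trans)
  qed
qed

lemma sat_UUntil_split:
  assumes "t \<le> b"
  shows "sat X t (UUntil \<phi> \<psi>) \<longleftrightarrow> until_before X \<phi> \<psi> t b \<or>
    ((\<forall>u. t \<le> u \<and> u < b \<longrightarrow> sat X u \<phi>) \<and> sat X b (UUntil \<phi> \<psi>))"
proof
  assume "sat X t (UUntil \<phi> \<psi>)"
  then obtain s where s: "t \<le> s" "sat X s \<psi>" "\<forall>u. t \<le> u \<and> u < s \<longrightarrow> sat X u \<phi>"
    by auto
  show "until_before X \<phi> \<psi> t b \<or>
    ((\<forall>u. t \<le> u \<and> u < b \<longrightarrow> sat X u \<phi>) \<and> sat X b (UUntil \<phi> \<psi>))"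
  proof (cases "s < b")
    case True
    with s show ?thesis unfolding until_before_def by blast
  next
    case False
    then have "b \<le> s" by simp
    with s assms show ?thesis unfolding sat_UUntil by (meson order.trans order.strict_trans2)
  qed
next
  assume "until_before X \<phi> \<psi> t b \<or>
    ((\<forall>u. t \<le> u \<and> u < b \<longrightarrow> sat X u \<phi>) \<and> sat X b (UUntil \<phi> \<psi>))"
  then show "sat X t (UUntil \<phi> \<psi>)"
  proof
    assume "until_before X \<phi> \<psi> t b"
    then show ?thesis by (rule until_before_imp_sat)
  next
    assume before: "(\<forall>u. t \<le> u \<and> u < b \<longrightarrow> sat X u \<phi>) \<and> sat X b (UUntil \<phi> \<psi>)"
    then obtain s where s: "b \<le> s" "sat X s \<psi>" "\<forall>u. b \<le> u \<and> u < s \<longrightarrow> sat X u \<phi>"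
      by auto
    have "sat X u \<phi>" if "t \<le> u" "u < s" for u
      using before s(3) that not_le by blast
    with s assms show ?thesis unfolding sat_UUntil by (meson order.trans)
  qed
qed

text \<open>A witness beyond the first period is folded back into it.\<close>

lemma until_before_periodic:
  assumes "periodic_from k m \<eta>" and "0 < m" and "sat \<eta> (k, 0) (UUntil \<phi> \<psi>)"
  shows "until_before \<eta> \<phi> \<psi> (k, 0) (k + m, 0)"
proof -
  obtain s where s: "(k, 0) \<le> s" "sat \<eta> s \<psi>"
    using assms(3) unfolding sat_UUntil by blast
  show ?thesis
  proof (cases "s < (k + m, 0)")
    case True
    with s assms(3) show ?thesis by (intro until_before_if_witness) auto
  next
    case False
    define i where "i = k + (fst s - k) mod m"
    have "fst s \<ge> k" "i < k + m"
      using False \<open>0 < m\<close> by (auto simp: i_def not_less less_eq_prod_def)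
    then have "fst s = i + (fst s - k) div m * m"
      by (simp add: i_def)
    then have "sat \<eta> (i, snd s) \<psi>"
      using s(2) sat_periodic_mult[OF assms(1), of i "(fst s - k) div m" "snd s" \<psi>]
      by (simp add: i_def)
    with assms(3) \<open>i < k + m\<close> show ?thesis
      by (intro until_before_if_witness) (auto simp: i_def)
  qed
qed

lemma sat_agree_before_boundary:
  assumes "0 < m"
    and rows: "\<forall>\<chi>\<in>Sub \<phi>. sat \<xi> (k, 0) \<chi> = sat \<xi> (k + m, 0) \<chi>"
    and agree: "\<forall>i < k + m. \<xi> i = \<eta> i"
    and periodic: "periodic_from k m \<eta>"
    and witness: "\<forall>\<psi> \<theta>. UUntil \<psi> \<theta> \<in> Sub \<phi> \<and> sat \<xi> (k, 0) (UUntil \<psi> \<theta>) \<longrightarrow>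
      (\<exists>r. (k, 0) \<le> r \<and> r < (k + m, 0) \<and> sat \<xi> r \<theta>)"
  shows "Sub \<chi> \<subseteq> Sub \<phi> \<Longrightarrow> i < k + m \<Longrightarrow> sat \<xi> (i, j) \<chi> = sat \<eta> (i, j) \<chi>"
proof (induction \<chi> arbitrary: i j)
  let ?B = "(k + m, 0)"
  have at_bound: "sat \<xi> ?B \<chi> = sat \<eta> ?B \<chi>"
    if "\<chi> \<in> Sub \<phi>" "sat \<xi> (k, 0) \<chi> = sat \<eta> (k, 0) \<chi>" for \<chi>
    using rows that sat_periodic[OF periodic, of k 0 \<chi>] by simp
  {
    case (Var n)
    then show ?case using agree by simp
  next
    case (NextW \<chi>)
    show ?case
    proof (cases "Suc i < k + m")
      case True
      with NextW show ?thesis by simp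
    next
      case False
      with NextW.prems have "Suc i = k + m" by simp
      moreover have "sat \<xi> (k, 0) \<chi> = sat \<eta> (k, 0) \<chi>"
        using NextW \<open>0 < m\<close> by simp
      ultimately show ?thesis
        using at_bound NextW.prems Sub_self by fastforce
    qed
  next
    case (UUntil \<psi> \<theta>)
    then have window: "\<forall>u. t \<le> u \<and> u < ?B \<longrightarrow> sat \<xi> u \<psi> = sat \<eta> u \<psi> \<and> sat \<xi> u \<theta> = sat \<eta> u \<theta>"
      for t by auto
    have "sat \<xi> (k, 0) (UUntil \<psi> \<theta>) \<longleftrightarrow> until_before \<xi> \<psi> \<theta> (k, 0) ?B"
      using witness UUntil.prems Sub_self until_before_if_witness until_before_imp_sat by blast
    also have "\<dots> \<longleftrightarrow> until_before \<eta> \<psi> \<theta> (k, 0) ?B"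
      using window by (rule until_before_cong)
    also have "\<dots> \<longleftrightarrow> sat \<eta> (k, 0) (UUntil \<psi> \<theta>)"
      using until_before_periodic[OF periodic \<open>0 < m\<close>] until_before_imp_sat by blast
    finally have "sat \<xi> ?B (UUntil \<psi> \<theta>) = sat \<eta> ?B (UUntil \<psi> \<theta>)"
      using at_bound UUntil.prems Sub_self by blast
    moreover have "until_before \<xi> \<psi> \<theta> (i, j) ?B \<longleftrightarrow> until_before \<eta> \<psi> \<theta> (i, j) ?B"
      using window by (rule until_before_cong)
    moreover have "(i, j) \<le> ?B"
      using UUntil.prems by simp
    ultimately show ?case
      using window unfolding sat_UUntil_split[OF \<open>(i, j) \<le> ?B\<close>] by blast
  }
qed auto

theorem mainTheorem14:
  fixes \<phi> :: form and \<xi> \<eta> :: model and k m :: nat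
  assumes "m > 0"
    and h1: "SubAt \<phi> (k, 0) \<xi> = SubAt \<phi> (k + m, 0) \<xi>"
    and h2: "\<forall>t p. lex_less t (k + m, 0) \<longrightarrow> \<xi> (fst t) (snd t) p = \<eta> (fst t) (snd t) p"
    and h3: "\<forall>s p. lex_le (k, 0) s \<longrightarrow> \<eta> (fst s) (snd s) p = \<eta> (fst s + m) (snd s) p"
    and h4: "\<forall>\<psi> \<theta>. UUntil \<psi> \<theta> \<in> Sub \<phi> \<and> sat \<xi> (k, 0) (UUntil \<psi> \<theta>) \<longrightarrow>
               (\<exists>r. lex_le (k, 0) r \<and> lex_less r (k + m, 0) \<and> sat \<xi> r \<theta>)"
  shows "(\<forall>t. lex_less t (k + m, 0) \<longrightarrow> SubAt \<phi> t \<xi> = SubAt \<phi> t \<eta>) \<and>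
         (\<forall>s. lex_le (k, 0) s \<longrightarrow> SubAt \<phi> s \<eta> = SubAt \<phi> (fst s + m, snd s) \<eta>)"
proof -
  have rows: "\<forall>\<chi>\<in>Sub \<phi>. sat \<xi> (k, 0) \<chi> = sat \<xi> (k + m, 0) \<chi>"
    using h1 unfolding SubAt_def by blast
  have agree: "\<forall>i < k + m. \<xi> i = \<eta> i"
  proof (intro allI impI ext)
    fix i j p assume "i < k + m"
    then show "\<xi> i j p = \<eta> i j p"
      using h2[rule_format, of "(i, j)" p] by simp
  qed
  have periodic: "periodic_from k m \<eta>"
  proof (unfold periodic_from_def, intro allI impI ext)
    fix i j p assume "k \<le> i"
    then show "\<eta> (i + m) j p = \<eta> i j p"
      using h3[rule_format, of "(i, j)" p] by simp
  qed
  have "sat \<xi> t \<chi> = sat \<eta> t \<chi>" if "\<chi> \<in> Sub \<phi>" "t < (k + m, 0)" for t \<chi>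
    using sat_agree_before_boundary[OF \<open>m > 0\<close> rows agree periodic h4[unfolded lex_le_eq_less_eq lex_less_eq_less]]
      Sub_mono[OF that(1)] that(2) by (cases t) simp
  moreover have "sat \<eta> s \<chi> = sat \<eta> (fst s + m, snd s) \<chi>" if "(k, 0) \<le> s" for s \<chi>
    using sat_periodic[OF periodic, of "fst s" "snd s" \<chi>] that by (cases s) auto
  ultimately show ?thesis
    unfolding SubAt_def lex_le_eq_less_eq lex_less_eq_less by blast
qed

end
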